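(* Let $M,N\ge0$ be integers and let $\phi\in\mathcal{D}_N^M$. If $\{\phi(x-a):\ a\in I_p\}$ is an orthonormal system in $L^2(\mathbb{Q}_p)$, then $$\sum_{l=0}^{p^{M+N}-1}\Big|\widehat\phi\Big(\frac{l}{p^M}\Big)\Big|^2\chi_p\Big(\frac{lk}{p^{M+N}}\Big)=p^N\delta_{k0},\qquad k=0,1,\dots,p^N-1,$$ where $\delta_{k0}$ is the Kronecker delta.
   Context: $p$ is a prime, $\mathbb{Q}_p$ the field of $p$-adic numbers with norm $|\cdot|_p$. The fractional part of $x=p^{\gamma}\sum_{j\ge0}x_jp^j$ ($x_j\in\{0,\dots,p-1\}$, $x_0\ne0$) is $\{x\}_p=p^{\gamma}\sum_{j=0}^{-\gamma-1}x_jp^j$, $\{0\}_p=0$; $\chi_p(x)=e^{2\pi i\{x\}_p}$; $I_p=\{a\in\mathbb{Q}_p:\{a\}_p=a\}$; $B_\gamma(a)=\{x:|x-a|_p\le p^\gamma\}$. $dx$ is Haar measure with $B_0(0)$ of measure $1$; $\widehat f(\xi)=\int\chi_p(\xi x)f(x)\,dx$. A test function is a locally constant compactly supported complex function. $\mathcal{D}_N^M$ is the set of test functions $\phi$ that are $p^M$-periodic ($\phi(x+p^M)=\phi(x)$) and supported in $B_N(0)$; equivalently, locally constant $\phi$ with $\operatorname{supp}\phi\subset B_N(0)$, $\operatorname{supp}\widehat\phi\subset B_M(0)$. *)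

theory Defs
  imports "HOL-Analysis.Analysis"
begin

text \<open>An element x of Q_p is represented by the function n \<mapsto> (canonical
  representative of x modulo p^n Z_p), i.e. the unique rational of the form
  a / p^m with 0 \<le> x(n) < p^n and x - x(n) \<in> p^n Z_p.  In terms of the digit
  expansion x = sum_j x_j p^j one has x(n) = sum_(j<n) x_j p^j.\<close>

type_synonym padic = "int \<Rightarrow> rat"

definition rmod :: "rat \<Rightarrow> rat \<Rightarrow> rat" where
  "rmod r q = r - q * of_int \<lfloor>r / q\<rfloor>"

definition Qp :: "nat \<Rightarrow> padic set" where
  "Qp p = {x. (\<forall>n. \<exists>a::int. \<exists>m::nat. x n = of_int a / of_nat p ^ m)
             \<and> (\<forall>n. 0 \<le> x n \<and> x n < of_nat p powi n)
             \<and> (\<forall>n. \<exists>t::int. x (n + 1) - x n = of_nat p powi n * of_int t)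
             \<and> (\<exists>g. \<forall>n\<le>g. x n = 0)}"

text \<open>Embedding of Z[1/p] (rationals whose denominator is a power of p) into Q_p.\<close>
definition pemb :: "nat \<Rightarrow> rat \<Rightarrow> padic" where
  "pemb p r = (\<lambda>n. rmod r (of_nat p powi n))"

definition pzero :: padic where "pzero = (\<lambda>n. 0)"

definition padd :: "nat \<Rightarrow> padic \<Rightarrow> padic \<Rightarrow> padic" where
  "padd p x y = (\<lambda>n. rmod (x n + y n) (of_nat p powi n))"

definition pneg :: "nat \<Rightarrow> padic \<Rightarrow> padic" where
  "pneg p x = (\<lambda>n. rmod (- x n) (of_nat p powi n))"

definition psub :: "nat \<Rightarrow> padic \<Rightarrow> padic \<Rightarrow> padic" where
  "psub p x y = padd p x (pneg p y)"

definition pmult :: "nat \<Rightarrow> padic \<Rightarrow> padic \<Rightarrow> padic" where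
  "pmult p x y = (\<lambda>n. THE r. eventually (\<lambda>m. rmod (x m * y m) (of_nat p powi n) = r) at_top)"

text \<open>p-adic norm: |x|_p = p^(-v(x)), v(x) = largest n with x \<in> p^n Z_p.\<close>
definition pnorm :: "nat \<Rightarrow> padic \<Rightarrow> real" where
  "pnorm p x = (if (\<forall>n. x n = 0) then 0
                else real p powr (- real_of_int (GREATEST n. x n = 0)))"

definition pball :: "nat \<Rightarrow> int \<Rightarrow> padic \<Rightarrow> padic set" where
  "pball p g a = {x \<in> Qp p. pnorm p (psub p x a) \<le> real p powr real_of_int g}"

text \<open>Fractional part {x}_p = sum_(j<0) x_j p^j = x(0).\<close>
definition pfrac :: "padic \<Rightarrow> rat" where
  "pfrac x = x 0"

definition pchi :: "nat \<Rightarrow> padic \<Rightarrow> complex" where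
  "pchi p x = cis (2 * pi * of_rat (pfrac x))"

definition Ip :: "nat \<Rightarrow> padic set" where
  "Ip p = {a \<in> Qp p. pemb p (pfrac a) = a}"

definition is_test_fun :: "nat \<Rightarrow> (padic \<Rightarrow> complex) \<Rightarrow> bool" where
  "is_test_fun p f \<longleftrightarrow>
     (\<exists>n::int. \<forall>x\<in>Qp p. f x \<noteq> 0 \<longrightarrow> x \<in> pball p n pzero)
   \<and> (\<forall>x\<in>Qp p. \<exists>g::int. \<forall>y\<in>pball p g x. f y = f x)"

text \<open>Riemann sum of f over B_n(0) with mesh B_(-k)(0) (each coset has Haar measure p^-k);
  the cosets of p^k Z_p in p^(-n) Z_p are represented by j / p^n, j < p^(n+k).\<close>
definition riemann_sum :: "nat \<Rightarrow> (padic \<Rightarrow> complex) \<Rightarrow> nat \<Rightarrow> nat \<Rightarrow> complex" where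
  "riemann_sum p f n k =
     (1 / of_nat p ^ k) * (\<Sum>j<p ^ (n + k). f (pemb p (of_nat j / of_nat p ^ n)))"

text \<open>Haar integral (B_0(0) of measure 1) of a test function: the Riemann sums
  are eventually constant and equal to the integral.\<close>
definition haar_int :: "nat \<Rightarrow> (padic \<Rightarrow> complex) \<Rightarrow> complex" where
  "haar_int p f = (THE I. \<exists>K::nat. \<forall>n\<ge>K. \<forall>k\<ge>K. riemann_sum p f n k = I)"

definition pfourier :: "nat \<Rightarrow> (padic \<Rightarrow> complex) \<Rightarrow> padic \<Rightarrow> complex" where
  "pfourier p f xi = haar_int p (\<lambda>x. pchi p (pmult p xi x) * f x)"

definition DNM :: "nat \<Rightarrow> nat \<Rightarrow> nat \<Rightarrow> (padic \<Rightarrow> complex) set" where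
  "DNM p N M = {f. is_test_fun p f
      \<and> (\<forall>x\<in>Qp p. f (padd p x (pemb p (of_nat p ^ M))) = f x)
      \<and> (\<forall>x\<in>Qp p. f x \<noteq> 0 \<longrightarrow> x \<in> pball p (int N) pzero)}"

definition L2_inner :: "nat \<Rightarrow> (padic \<Rightarrow> complex) \<Rightarrow> (padic \<Rightarrow> complex) \<Rightarrow> complex" where
  "L2_inner p f g = haar_int p (\<lambda>x. f x * cnj (g x))"

definition orthonormal_translates :: "nat \<Rightarrow> (padic \<Rightarrow> complex) \<Rightarrow> bool" where
  "orthonormal_translates p f \<longleftrightarrow>
     (\<forall>a\<in>Ip p. \<forall>b\<in>Ip p.
        L2_inner p (\<lambda>x. f (psub p x a)) (\<lambda>x. f (psub p x b)) = (if a = b then 1 else 0))"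

end

theory Submission
  imports Defs
begin

text \<open>A function \<open>\<phi> \<in> D\<^sub>N\<^sup>M\<close> vanishes off the grid \<open>p\<^sup>-\<^sup>N\<int>\<close> and is \<open>p\<^sup>M\<close>-periodic, so it is
  encoded by the \<open>P\<close>-periodic sequence \<open>c(i) = \<phi>(i/p\<^sup>N)\<close>, \<open>P = p\<^sup>N\<^sup>+\<^sup>M\<close>, and every Haar
  integral in the statement is a finite sum over one period. Then the Fourier transform of
  \<open>\<phi>\<close> at \<open>l/p\<^sup>M\<close> is \<open>p\<^sup>-\<^sup>M\<close> times the discrete Fourier transform of \<open>c\<close>, and orthonormality of the
  translates by \<open>k/p\<^sup>N \<in> I\<^sub>p\<close> says that the autocorrelation \<open>\<Sum>\<^sub>j c(j-k) c(j)\<^sup>*\<close> equals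
  \<open>p\<^sup>M \<delta>\<^sub>k\<^sub>0\<close>. The claim is the discrete Wiener--Khinchin identity relating the power
  spectrum of \<open>c\<close> to its autocorrelation.\<close>

section \<open>The embedding of \<open>\<int>[1/p]\<close> into \<open>\<rat>\<^sub>p\<close>\<close>

lemma rmod_add_mult: "q \<noteq> 0 \<Longrightarrow> rmod (x + q * of_int t) q = rmod x q"
proof -
  assume q: "q \<noteq> 0"
  have "(x + q * of_int t) / q = x / q + of_int t" using q by (simp add: field_simps)
  then have "\<lfloor>(x + q * of_int t) / q\<rfloor> = \<lfloor>x / q\<rfloor> + t" by simp
  then show ?thesis unfolding rmod_def by (simp add: algebra_simps)
qed

lemma rmod_eq_self: "0 \<le> r \<Longrightarrow> r < q \<Longrightarrow> rmod r q = r"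
  unfolding rmod_def by (simp add: floor_eq_iff)

lemma rmod_eq_0_iff: "q \<noteq> 0 \<Longrightarrow> rmod r q = 0 \<longleftrightarrow> (\<exists>z::int. r = q * of_int z)"
  unfolding rmod_def by auto

lemma rmod_bounds:
  assumes q: "(q::rat) > 0"
  shows "0 \<le> rmod r q \<and> rmod r q < q"
proof -
  have fl: "of_int \<lfloor>r/q\<rfloor> \<le> r/q" "r/q < of_int \<lfloor>r/q\<rfloor> + 1" by linarith+
  have "q * of_int \<lfloor>r/q\<rfloor> \<le> r" using mult_left_mono[OF fl(1), of q] q by (simp add: field_simps)
  moreover have "r < q * of_int \<lfloor>r/q\<rfloor> + q"
    using mult_strict_left_mono[OF fl(2) q] q by (simp add: field_simps)
  ultimately show ?thesis unfolding rmod_def by simp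
qed

lemma padd_pemb: "p > 0 \<Longrightarrow> padd p (pemb p r) (pemb p s) = pemb p (r + s)"
proof (rule ext)
  fix n assume p: "p > 0"
  define Q where "Q = (of_nat p :: rat) powi n"
  have Q: "Q \<noteq> 0" using p unfolding Q_def by simp
  have "rmod r Q + rmod s Q = (r + s) + Q * of_int (- \<lfloor>r/Q\<rfloor> - \<lfloor>s/Q\<rfloor>)"
    unfolding rmod_def by (simp add: algebra_simps)
  then have "rmod (rmod r Q + rmod s Q) Q = rmod (r + s) Q"
    using rmod_add_mult[OF Q, of "r + s" "- \<lfloor>r/Q\<rfloor> - \<lfloor>s/Q\<rfloor>"] by simp
  then show "padd p (pemb p r) (pemb p s) n = pemb p (r + s) n"
    unfolding padd_def pemb_def Q_def[symmetric] .
qed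

lemma pneg_pemb: "p > 0 \<Longrightarrow> pneg p (pemb p r) = pemb p (- r)"
proof (rule ext)
  fix n assume p: "p > 0"
  define Q where "Q = (of_nat p :: rat) powi n"
  have Q: "Q \<noteq> 0" using p unfolding Q_def by simp
  have "- rmod r Q = (- r) + Q * of_int \<lfloor>r/Q\<rfloor>"
    unfolding rmod_def by (simp add: algebra_simps)
  then have "rmod (- rmod r Q) Q = rmod (- r) Q"
    using rmod_add_mult[OF Q, of "- r" "\<lfloor>r/Q\<rfloor>"] by simp
  then show "pneg p (pemb p r) n = pemb p (- r) n"
    unfolding pneg_def pemb_def Q_def[symmetric] .
qed

lemma psub_pemb: "p > 0 \<Longrightarrow> psub p (pemb p r) (pemb p s) = pemb p (r - s)"
  unfolding psub_def by (simp add: pneg_pemb padd_pemb)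

lemma pzero_eq_pemb_0: "pzero = pemb p 0"
  unfolding pzero_def pemb_def rmod_def by simp

lemma pemb_eventually_eq:
  assumes p: "p \<ge> 2" and r: "0 \<le> r"
  shows "eventually (\<lambda>m. pemb p r m = r) at_top"
proof -
  have "pemb p r m = r" if m: "m \<ge> max 0 (\<lceil>r\<rceil> + 1)" for m :: int
  proof -
    have "r < of_nat (nat m)" using m by linarith
    also have "\<dots> < of_nat (2 ^ nat m)" by (simp only: of_nat_less_iff less_exp)
    also have "\<dots> \<le> (of_nat p :: rat) ^ nat m" using p by (simp add: power_mono)
    also have "\<dots> = of_nat p powi m" using m by (simp add: power_int_def)
    finally show ?thesis unfolding pemb_def using r by (simp add: rmod_eq_self)
  qed
  then show ?thesis unfolding eventually_at_top_linorder by blast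
qed

text \<open>\<open>pmult\<close> is defined by a limit of products of representatives, which stabilise
  only for nonnegative rationals.\<close>

lemma pmult_pemb:
  assumes p: "p \<ge> 2" and r: "0 \<le> r" and s: "0 \<le> s"
  shows "pmult p (pemb p r) (pemb p s) = pemb p (r * s)"
proof (rule ext)
  fix n
  have ev: "eventually (\<lambda>m. rmod (pemb p r m * pemb p s m) (of_nat p powi n) = pemb p (r * s) n) at_top"
    using eventually_conj[OF pemb_eventually_eq[OF p r] pemb_eventually_eq[OF p s]]
    by (rule eventually_mono) (simp add: pemb_def)
  show "pmult p (pemb p r) (pemb p s) n = pemb p (r * s) n"
    unfolding pmult_def
  proof (rule the_equality)
    fix y assume "eventually (\<lambda>m. rmod (pemb p r m * pemb p s m) (of_nat p powi n) = y) at_top"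
    from eventually_happens'[OF _ eventually_conj[OF this ev]]
    show "y = pemb p (r * s) n" by auto
  qed (rule ev)
qed

lemma pchi_pemb: "pchi p (pemb p r) = cis (2 * pi * of_rat r)"
proof -
  have "of_rat (pfrac (pemb p r)) = of_rat r - (of_int \<lfloor>r\<rfloor> :: real)"
    unfolding pfrac_def pemb_def rmod_def by (simp add: of_rat_diff)
  then have "pchi p (pemb p r) = cis (2 * pi * of_rat r - 2 * pi * of_int \<lfloor>r\<rfloor>)"
    unfolding pchi_def by (simp only: right_diff_distrib)
  also have "\<dots> = cis (2 * pi * of_rat r) / cis (2 * pi * of_int \<lfloor>r\<rfloor>)"
    by (rule cis_divide[symmetric])
  finally show ?thesis by simp
qed

definition p_fraction :: "nat \<Rightarrow> rat \<Rightarrow> bool" where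
  "p_fraction p r \<longleftrightarrow> (\<exists>c::int. \<exists>u::nat. r = of_int c / of_nat p ^ u)"

lemma p_fraction_of_int_divide: "p_fraction p (of_int c / of_nat p ^ n)"
  unfolding p_fraction_def by blast

lemma p_fraction_of_int: "p_fraction p (of_int c)"
  using p_fraction_of_int_divide[of p c 0] by simp

lemma p_fraction_diff:
  assumes "p > 0" "p_fraction p r" "p_fraction p s"
  shows "p_fraction p (r - s)"
proof -
  obtain c u d v where r: "r = of_int c / of_nat p ^ u" and s: "s = of_int d / of_nat p ^ v"
    using assms unfolding p_fraction_def by blast
  have "r - s = of_int (c * p ^ v - d * p ^ u) / of_nat p ^ (u + v)"
    using assms(1) unfolding r s by (simp add: field_simps power_add)
  then show ?thesis unfolding p_fraction_def by blast
qed

lemma p_fraction_mult: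
  assumes "p > 0" "p_fraction p r" "p_fraction p s"
  shows "p_fraction p (r * s)"
proof -
  obtain c u d v where r: "r = of_int c / of_nat p ^ u" and s: "s = of_int d / of_nat p ^ v"
    using assms unfolding p_fraction_def by blast
  have "r * s = of_int (c * d) / of_nat p ^ (u + v)"
    using assms(1) unfolding r s by (simp add: field_simps power_add)
  then show ?thesis unfolding p_fraction_def by blast
qed

lemma p_fraction_powi: "p_fraction p (of_nat p powi n)"
proof (cases "n \<ge> 0")
  case True
  then have "(of_nat p :: rat) powi n = of_int (int p ^ nat n) / of_nat p ^ 0"
    by (simp add: power_int_def)
  then show ?thesis unfolding p_fraction_def by blast
next
  case False
  then have "(of_nat p :: rat) powi n = of_int 1 / of_nat p ^ nat (- n)"
    by (simp add: power_int_def power_inverse divide_inverse)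
  then show ?thesis unfolding p_fraction_def by blast
qed

lemma pemb_eq_0_iff: "p > 0 \<Longrightarrow> pemb p r n = 0 \<longleftrightarrow> (\<exists>z::int. r = of_nat p powi n * of_int z)"
  unfolding pemb_def by (rule rmod_eq_0_iff) simp

lemma pemb_eq_0_mono:
  assumes p: "p > 0" and z: "pemb p r n = 0" and mn: "m \<le> n"
  shows "pemb p r m = 0"
proof -
  obtain z where r: "r = of_nat p powi n * of_int z" using z pemb_eq_0_iff[OF p] by blast
  have "(of_nat p :: rat) powi n = of_nat p powi m * of_nat p powi (n - m)"
    using p by (simp flip: power_int_add)
  also have "(of_nat p :: rat) powi (n - m) = of_int (int p ^ nat (n - m))"
    using mn by (simp add: power_int_def)
  finally have "r = of_nat p powi m * of_int (int p ^ nat (n - m) * z)" unfolding r by simp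
  then show ?thesis using pemb_eq_0_iff[OF p] by blast
qed

lemma pemb_eq_0_below:
  assumes p: "p > 0" and r: "r = of_int c / of_nat p ^ u" and n: "n \<le> - int u"
  shows "pemb p r n = 0"
proof -
  have "r = of_nat p powi (- int u) * of_int c" unfolding r by (simp add: power_int_minus divide_inverse)
  then show ?thesis using pemb_eq_0_mono[OF p _ n] pemb_eq_0_iff[OF p] by blast
qed

lemma pemb_in_Qp:
  assumes p: "p \<ge> 2" and r: "p_fraction p r"
  shows "pemb p r \<in> Qp p"
proof -
  have p0: "p > 0" using p by simp
  define q :: rat where "q = of_nat p"
  have q0: "q > 0" using p unfolding q_def by simp
  have Qpos: "q powi n > 0" for n using q0 by simp
  have digits: "\<exists>a::int. \<exists>m::nat. pemb p r n = of_int a / of_nat p ^ m" for n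
  proof -
    have "p_fraction p (r - q powi n * of_int \<lfloor>r / q powi n\<rfloor>)"
      unfolding q_def by (intro p_fraction_diff p_fraction_mult p_fraction_powi p_fraction_of_int p0 r)
    then show ?thesis unfolding pemb_def rmod_def q_def p_fraction_def .
  qed
  have bounds: "0 \<le> pemb p r n \<and> pemb p r n < of_nat p powi n" for n
    unfolding pemb_def using rmod_bounds[OF Qpos[of n]] unfolding q_def .
  have compatible: "\<exists>t::int. pemb p r (n + 1) - pemb p r n = of_nat p powi n * of_int t" for n
  proof -
    have e: "q powi (n + 1) = q powi n * q" using q0 by (simp add: power_int_add_1)
    have "pemb p r (n + 1) - pemb p r n
        = q powi n * of_int (\<lfloor>r / q powi n\<rfloor> - int p * \<lfloor>r / q powi (n + 1)\<rfloor>)"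
      unfolding pemb_def rmod_def q_def[symmetric] e by (simp add: algebra_simps q_def)
    then show ?thesis unfolding q_def by blast
  qed
  obtain c u where cu: "r = of_int c / of_nat p ^ u" using r unfolding p_fraction_def by blast
  have vanishing: "\<forall>n \<le> - int u. pemb p r n = 0"
    using pemb_eq_0_below[OF p0 cu] by blast
  show ?thesis unfolding Qp_def using digits bounds compatible vanishing by blast
qed

lemma pemb_in_Ip:
  assumes p: "p \<ge> 2" and r: "p_fraction p r" "0 \<le> r" "r < 1"
  shows "pemb p r \<in> Ip p"
proof -
  have "pfrac (pemb p r) = r" unfolding pfrac_def pemb_def using r by (simp add: rmod_eq_self)
  then show ?thesis unfolding Ip_def using pemb_in_Qp[OF p r(1)] by simp
qed

text \<open>The \<open>GREATEST\<close> in \<open>pnorm\<close> is the valuation; it exists because the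
  set of levels at which the representative vanishes is bounded above (by \<open>-N\<close>,
  as \<open>r \<notin> p\<^sup>-\<^sup>N\<int>\<close>) and contains \<open>-u\<close> for a denominator \<open>p\<^sup>u\<close> of \<open>r\<close>.\<close>

lemma pnorm_pemb_gt:
  assumes p: "p \<ge> 2" and r: "p_fraction p r" and off_grid: "\<nexists>i::int. r = of_int i / of_nat p ^ N"
  shows "real p powr real N < pnorm p (pemb p r)"
proof -
  have p0: "p > 0" using p by simp
  define S where "S = {n. pemb p r n = 0}"
  have notN: "- int N \<notin> S"
  proof
    assume "- int N \<in> S"
    then obtain z where "r = of_nat p powi (- int N) * of_int z"
      unfolding S_def using pemb_eq_0_iff[OF p0] by blast
    then have "r = of_int z / of_nat p ^ N" by (simp add: power_int_minus divide_inverse)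
    then show False using off_grid by blast
  qed
  have S_bound: "n \<in> S \<Longrightarrow> n < - int N" for n
    using pemb_eq_0_mono[OF p0, of r n "- int N"] notN unfolding S_def by force
  obtain c u where cu: "r = of_int c / of_nat p ^ u" using r unfolding p_fraction_def by blast
  have uS: "- int u \<in> S" unfolding S_def using pemb_eq_0_below[OF p0 cu] by simp
  define T where "T = S \<inter> {- int u..}"
  have Tfin: "finite T" unfolding T_def
    by (rule finite_subset[of _ "{- int u..- int N}"]) (use S_bound in force)+
  have Tne: "T \<noteq> {}" unfolding T_def using uS by auto
  define m where "m = Max T"
  have mS: "m \<in> S" using Max_in[OF Tfin Tne] unfolding m_def T_def by auto
  have m_max: "y \<le> m" if "y \<in> S" for y
  proof (cases "y \<ge> - int u")
    case True
    then show ?thesis using that Tfin unfolding m_def T_def by simp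
  next
    case False
    have "- int u \<le> m" unfolding m_def using Tfin uS T_def by (simp add: Max_ge)
    then show ?thesis using False by simp
  qed
  have "(GREATEST n. pemb p r n = 0) = m"
    by (rule Greatest_equality) (use mS m_max S_def in auto)
  moreover have "\<not> (\<forall>n. pemb p r n = 0)" using notN unfolding S_def by auto
  ultimately have "pnorm p (pemb p r) = real p powr (- real_of_int m)"
    unfolding pnorm_def by auto
  moreover have "m < - int N" using S_bound mS by simp
  ultimately show ?thesis using p by simp
qed

section \<open>Functions in \<open>D\<^sub>N\<^sup>M\<close> on the grid \<open>p\<^sup>-\<^sup>N\<int>\<close>\<close>

lemma DNM_vanishes_off_grid:
  assumes p: "p \<ge> 2" and phi: "phi \<in> DNM p N M" and r: "p_fraction p r"
    and nz: "phi (pemb p r) \<noteq> 0"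
  shows "\<exists>i::int. r = of_int i / of_nat p ^ N"
proof (rule ccontr)
  assume off_grid: "\<not> ?thesis"
  have p0: "p > 0" using p by simp
  have "pemb p r \<in> pball p (int N) pzero"
    using phi pemb_in_Qp[OF p r] nz unfolding DNM_def by blast
  then have "pnorm p (pemb p r) \<le> real p powr real N"
    unfolding pball_def pzero_eq_pemb_0[of p] using psub_pemb[OF p0, of r 0] by simp
  then show False using pnorm_pemb_gt[OF p r off_grid] by simp
qed

lemma DNM_translate_period:
  assumes p: "p \<ge> 2" and phi: "phi \<in> DNM p N M" and r: "p_fraction p r"
  shows "phi (pemb p (r + of_nat p ^ M)) = phi (pemb p r)"
proof -
  have "phi (padd p (pemb p r) (pemb p (of_nat p ^ M))) = phi (pemb p r)"
    using phi pemb_in_Qp[OF p r] unfolding DNM_def by blast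
  then show ?thesis using p by (simp add: padd_pemb)
qed

definition grid_val :: "nat \<Rightarrow> nat \<Rightarrow> (padic \<Rightarrow> complex) \<Rightarrow> int \<Rightarrow> complex" where
  "grid_val p N phi i = phi (pemb p (of_int i / of_nat p ^ N))"

lemma grid_val_periodic:
  assumes p: "p \<ge> 2" and phi: "phi \<in> DNM p N M"
  shows "grid_val p N phi (i + int (p ^ (N + M)) * t) = grid_val p N phi i"
proof -
  have q0: "(of_nat p :: rat) \<noteq> 0" using p by simp
  have shift_nat: "grid_val p N phi (i + int (p ^ (N + M)) * int t) = grid_val p N phi i"
    for i and t :: nat
  proof (induction t)
    case (Suc t)
    have shift: "(of_int (i + int (p ^ (N + M)) * int (Suc t)) :: rat) / of_nat p ^ N
        = of_int (i + int (p ^ (N + M)) * int t) / of_nat p ^ N + of_nat p ^ M"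
      using q0 by (simp add: field_simps power_add)
    have "grid_val p N phi (i + int (p ^ (N + M)) * int (Suc t))
        = phi (pemb p (of_int (i + int (p ^ (N + M)) * int t) / of_nat p ^ N + of_nat p ^ M))"
      unfolding grid_val_def shift ..
    also have "\<dots> = grid_val p N phi (i + int (p ^ (N + M)) * int t)"
      unfolding grid_val_def by (rule DNM_translate_period[OF p phi p_fraction_of_int_divide])
    finally show ?case using Suc.IH by simp
  qed simp
  show ?thesis
  proof (cases "t \<ge> 0")
    case True
    then show ?thesis using shift_nat[of i "nat t"] by simp
  next
    case False
    then show ?thesis using shift_nat[of "i + int (p ^ (N + M)) * t" "nat (- t)"]
      by (simp add: algebra_simps)
  qed
qed

lemma DNM_on_finer_grid:
  assumes p: "p \<ge> 2" and phi: "phi \<in> DNM p N M" and n: "n \<ge> N"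
  shows "phi (pemb p (of_int j / of_nat p ^ n))
       = (if int (p ^ (n - N)) dvd j then grid_val p N phi (j div int (p ^ (n - N))) else 0)"
proof -
  define d where "d = p ^ (n - N)"
  have d0: "d > 0" unfolding d_def using p by simp
  have q0: "(of_nat p :: rat) \<noteq> 0" using p by simp
  have qn: "(of_nat p :: rat) ^ n = of_nat p ^ N * of_nat d"
    unfolding d_def using n by (simp flip: power_add)
  show ?thesis
  proof (cases "int d dvd j")
    case True
    then obtain i where j: "j = int d * i" by blast
    have "(of_int j :: rat) / of_nat p ^ n = of_int i / of_nat p ^ N"
      unfolding j qn using d0 q0 by (simp add: field_simps)
    moreover have "j div int d = i" unfolding j using d0 by simp
    ultimately show ?thesis using True unfolding d_def grid_val_def by simp
  next
    case False
    have "phi (pemb p (of_int j / of_nat p ^ n)) = 0"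
    proof (rule ccontr)
      assume "phi (pemb p (of_int j / of_nat p ^ n)) \<noteq> 0"
      then obtain i where "(of_int j :: rat) / of_nat p ^ n = of_int i / of_nat p ^ N"
        using DNM_vanishes_off_grid[OF p phi p_fraction_of_int_divide] by blast
      then have "(of_int j :: rat) = of_int (i * int d)"
        unfolding qn using d0 q0 by (simp add: field_simps)
      then have "j = i * int d" by linarith
      then show False using False by simp
    qed
    then show ?thesis using False unfolding d_def by simp
  qed
qed

lemma DNM_translate_on_finer_grid:
  assumes p: "p \<ge> 2" and phi: "phi \<in> DNM p N M" and n: "n \<ge> N"
  shows "phi (psub p (pemb p (of_nat j / of_nat p ^ n)) (pemb p (of_nat k / of_nat p ^ N)))
       = (if p ^ (n - N) dvd j then grid_val p N phi (int (j div p ^ (n - N)) - int k) else 0)"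
proof -
  define d where "d = p ^ (n - N)"
  have d0: "d > 0" unfolding d_def using p by simp
  have p0: "p > 0" and q0: "(of_nat p :: rat) > 0" using p by simp_all
  have qn: "(of_nat p :: rat) ^ n = of_nat p ^ N * of_nat d"
    unfolding d_def using n by (simp flip: power_add)
  have diff: "psub p (pemb p (of_nat j / of_nat p ^ n)) (pemb p (of_nat k / of_nat p ^ N))
      = pemb p (of_int (int j - int k * int d) / of_nat p ^ n)"
    unfolding psub_pemb[OF p0] qn using d0 q0 by (simp add: field_simps)
  have dvd_iff: "int d dvd (int j - int k * int d) \<longleftrightarrow> d dvd j"
    by (metis dvd_diff_commute dvd_triv_right int_dvd_int_iff dvd_add_left_iff diff_add_cancel
        dvd_diff)
  have "(int j - int k * int d) div int d = int (j div d) - int k" if "d dvd j"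
    using d0 that by (auto simp: zdiv_int elim!: dvdE)
  then show ?thesis
    unfolding diff DNM_on_finer_grid[OF p phi n] d_def[symmetric] using dvd_iff by simp
qed

section \<open>Haar integrals of functions living on a grid\<close>

lemma sum_multiples_lessThan:
  assumes d: "(d::nat) > 0"
  shows "(\<Sum>j<d * m. if d dvd j then H (j div d) else 0) = (\<Sum>i<m. H i)"
proof -
  have "(\<Sum>j<d * m. if d dvd j then H (j div d) else 0) = (\<Sum>j\<in>{j\<in>{..<d * m}. d dvd j}. H (j div d))"
    by (simp only: sum.inter_filter[OF finite_lessThan])
  also have "{j\<in>{..<d * m}. d dvd j} = (\<lambda>i. d * i) ` {..<m}"
    using d by (auto elim!: dvdE)
  also have "(\<Sum>j\<in>(\<lambda>i. d * i) ` {..<m}. H (j div d)) = (\<Sum>i<m. H i)"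
    by (subst sum.reindex) (use d in \<open>auto simp: inj_on_def\<close>)
  finally show ?thesis .
qed

lemma sum_lessThan_periodic:
  fixes G :: "nat \<Rightarrow> 'a::comm_semiring_1"
  assumes G: "\<And>i m. G (i + P * m) = G i"
  shows "(\<Sum>i<P * m. G i) = of_nat m * (\<Sum>i<P. G i)"
proof (induction m)
  case (Suc m)
  have "(\<Sum>i<P * Suc m. G i) = (\<Sum>i<P * m. G i) + (\<Sum>i\<in>{P * m..<P * m + P}. G i)"
    by (simp add: sum.atLeastLessThan_concat[symmetric] lessThan_atLeast0 algebra_simps)
  also have "(\<Sum>i\<in>{P * m..<P * m + P}. G i) = (\<Sum>i<P. G (i + P * m))"
    using sum.shift_bounds_nat_ivl[of G 0 "P * m" P] by (simp add: lessThan_atLeast0 add.commute)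
  finally show ?case using Suc G by (simp add: algebra_simps)
qed simp

text \<open>For \<open>n \<ge> L\<close> and \<open>k \<ge> K\<close> the Riemann sum of mesh \<open>p\<^sup>-\<^sup>k\<close> over \<open>B\<^sub>n(0)\<close> sees
  \<open>p\<^sup>k\<^sup>-\<^sup>K\<close> periods of \<open>G\<close>, each weighted by \<open>p\<^sup>-\<^sup>k\<close>; so it is independent of \<open>n, k\<close>.\<close>

lemma haar_int_eq_period_sum:
  assumes p: "p > 0"
    and f: "\<And>n j. n \<ge> L \<Longrightarrow> f (pemb p (of_nat j / of_nat p ^ n))
               = (if p ^ (n - L) dvd j then G (j div p ^ (n - L)) else 0)"
    and G: "\<And>i m. G (i + p ^ (L + K) * m) = G i"
  shows "haar_int p f = (\<Sum>i<p ^ (L + K). G i) / of_nat p ^ K"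
proof -
  define I where "I = (\<Sum>i<p ^ (L + K). G i) / of_nat p ^ K"
  have riemann: "riemann_sum p f n k = I" if n: "n \<ge> L" and k: "k \<ge> K" for n k
  proof -
    have e1: "p ^ (n + k) = p ^ (n - L) * p ^ (L + k)" using n by (simp flip: power_add)
    have e2: "p ^ (L + k) = p ^ (L + K) * p ^ (k - K)" using k by (simp flip: power_add)
    have "(\<Sum>j<p ^ (n + k). f (pemb p (of_nat j / of_nat p ^ n)))
        = (\<Sum>j<p ^ (n - L) * p ^ (L + k). if p ^ (n - L) dvd j then G (j div p ^ (n - L)) else 0)"
      unfolding e1 using f n by simp
    also have "\<dots> = (\<Sum>i<p ^ (L + k). G i)" by (rule sum_multiples_lessThan) (use p in simp)
    also have "\<dots> = of_nat (p ^ (k - K)) * (\<Sum>i<p ^ (L + K). G i)"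
      unfolding e2 by (rule sum_lessThan_periodic[OF G])
    finally show ?thesis
      using p k unfolding riemann_sum_def I_def by (simp add: field_simps flip: power_add)
  qed
  show ?thesis unfolding haar_int_def I_def[symmetric]
  proof (rule the_equality)
    fix J assume "\<exists>K'. \<forall>n\<ge>K'. \<forall>k\<ge>K'. riemann_sum p f n k = J"
    then obtain K' where "\<forall>n\<ge>K'. \<forall>k\<ge>K'. riemann_sum p f n k = J" by blast
    then show "J = I" using riemann[of "K' + L + K" "K' + L + K"] by simp
  qed (use riemann in \<open>auto intro!: exI[of _ "L + K"]\<close>)
qed

section \<open>Discrete Fourier analysis\<close>

definition dft :: "nat \<Rightarrow> (int \<Rightarrow> complex) \<Rightarrow> nat \<Rightarrow> complex" where
  "dft P c l = (\<Sum>i<P. cis (2 * pi * (real l * real i) / real P) * c (int i))"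

lemma sum_roots_of_unity:
  assumes P: "P > 0"
  shows "(\<Sum>l<P. cis (2 * pi * (real l * real_of_int m) / real P))
       = (if int P dvd m then of_nat P else 0)"
proof -
  define z where "z = cis (2 * pi * real_of_int m / real P)"
  have pow: "cis (2 * pi * (real l * real_of_int m) / real P) = z ^ l" for l
  proof -
    have "z ^ l = cis (real l * (2 * pi * real_of_int m / real P))" by (simp only: z_def Complex.DeMoivre)
    then show ?thesis by (simp add: algebra_simps)
  qed
  show ?thesis
  proof (cases "int P dvd m")
    case True
    then obtain t where m: "m = int P * t" by blast
    have "z = cis (2 * pi * real_of_int t)" unfolding z_def m using P by (simp add: field_simps)
    then have "z = 1" by simp
    then show ?thesis unfolding pow using True by simp
  next
    case False
    have "z \<noteq> 1"
    proof
      assume "z = 1"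
      then have "cos (2 * pi * real_of_int m / real P) = 1" unfolding z_def
        by (metis cis.sel(1) one_complex.sel(1))
      then obtain n :: int where "2 * pi * real_of_int m / real P = of_int n * 2 * pi"
        using cos_one_2pi_int by blast
      then have "real_of_int m = real_of_int (int P * n)" using P by (simp add: field_simps)
      then show False using False by (metis dvd_triv_left of_int_eq_iff)
    qed
    moreover have "z ^ P = 1"
    proof -
      have "z ^ P = cis (real P * (2 * pi * real_of_int m / real P))"
        by (simp only: z_def Complex.DeMoivre)
      then show ?thesis using P by simp
    qed
    ultimately show ?thesis unfolding pow geometric_sum[OF \<open>z \<noteq> 1\<close>] using False by simp
  qed
qed

lemma norm_sq_dft_mult_cis:
  "of_real ((cmod (dft P c l))\<^sup>2) * cis (2 * pi * (real l * real k) / real P)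
   = (\<Sum>i<P. \<Sum>j<P. c (int i) * cnj (c (int j))
       * cis (2 * pi * (real l * real_of_int (int i - int j + int k)) / real P))"
proof -
  have "of_real ((cmod (dft P c l))\<^sup>2) * cis (2 * pi * (real l * real k) / real P)
      = (\<Sum>i<P. \<Sum>j<P. (cis (2 * pi * (real l * real i) / real P) * c (int i))
          * cnj (cis (2 * pi * (real l * real j) / real P) * c (int j))
          * cis (2 * pi * (real l * real k) / real P))"
    unfolding complex_norm_square dft_def
    by (simp add: sum_distrib_left sum_distrib_right cnj_sum, rule sum.swap)
  also have "\<dots> = (\<Sum>i<P. \<Sum>j<P. c (int i) * cnj (c (int j))
       * cis (2 * pi * (real l * real_of_int (int i - int j + int k)) / real P))"
    by (intro sum.cong refl)
      (simp add: cis_cnj cis_mult algebra_simps add_divide_distrib diff_divide_distrib)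
  finally show ?thesis .
qed

lemma dft_power_spectrum_autocorrelation:
  assumes P: "P > 0" and per: "\<And>i t. c (i + int P * t) = c i"
  shows "(\<Sum>l<P. of_real ((cmod (dft P c l))\<^sup>2) * cis (2 * pi * (real l * real k) / real P))
       = of_nat P * (\<Sum>j<P. c (int j - int k) * cnj (c (int j)))"
proof -
  have collapse: "(\<Sum>i<P. \<Sum>l<P. c (int i) * cnj (c (int j))
        * cis (2 * pi * (real l * real_of_int (int i - int j + int k)) / real P))
      = of_nat P * (c (int j - int k) * cnj (c (int j)))" for j
  proof -
    define i0 where "i0 = nat ((int j - int k) mod int P)"
    have i0: "i0 < P" unfolding i0_def using P by (simp add: nat_less_iff)
    have dvd_iff: "int P dvd (int i - int j + int k) \<longleftrightarrow> i = i0" if "i < P" for i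
    proof -
      have "int P dvd (int i - int j + int k) \<longleftrightarrow> int i mod int P = (int j - int k) mod int P"
        by (simp add: mod_eq_dvd_iff algebra_simps)
      then show ?thesis using that P unfolding i0_def by auto
    qed
    have "int i0 = (int j - int k) mod int P" unfolding i0_def using P by simp
    then have "int i0 = (int j - int k) + int P * (- ((int j - int k) div int P))"
      by (simp add: algebra_simps minus_div_mult_eq_mod[symmetric])
    then have c_i0: "c (int i0) = c (int j - int k)" by (metis per)
    have "(\<Sum>i<P. \<Sum>l<P. c (int i) * cnj (c (int j))
          * cis (2 * pi * (real l * real_of_int (int i - int j + int k)) / real P))
        = (\<Sum>i<P. if i = i0 then of_nat P * (c (int i) * cnj (c (int j))) else 0)"
    proof (intro sum.cong refl)
      fix i assume "i \<in> {..<P}"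
      then have "(\<Sum>l<P. cis (2 * pi * (real l * real_of_int (int i - int j + int k)) / real P))
          = (if i = i0 then of_nat P else 0)"
        using sum_roots_of_unity[OF P, of "int i - int j + int k"] dvd_iff[of i] by simp
      then show "(\<Sum>l<P. c (int i) * cnj (c (int j))
          * cis (2 * pi * (real l * real_of_int (int i - int j + int k)) / real P))
          = (if i = i0 then of_nat P * (c (int i) * cnj (c (int j))) else 0)"
        unfolding sum_distrib_left[symmetric] by simp
    qed
    then show ?thesis using i0 c_i0 by simp
  qed
  have "(\<Sum>l<P. of_real ((cmod (dft P c l))\<^sup>2) * cis (2 * pi * (real l * real k) / real P))
      = (\<Sum>j<P. \<Sum>i<P. \<Sum>l<P. c (int i) * cnj (c (int j))
          * cis (2 * pi * (real l * real_of_int (int i - int j + int k)) / real P))"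
    unfolding norm_sq_dft_mult_cis by (subst sum.swap, subst (2) sum.swap) (subst sum.swap, rule refl)
  also have "\<dots> = of_nat P * (\<Sum>j<P. c (int j - int k) * cnj (c (int j)))"
    by (simp only: collapse sum_distrib_left)
  finally show ?thesis .
qed

section \<open>Fourier transform and translates of functions in \<open>D\<^sub>N\<^sup>M\<close>\<close>

text \<open>Orthonormality is only used for the translates by \<open>a = k/p\<^sup>N\<close> and \<open>b = 0\<close>.\<close>

lemma orthonormal_translates_autocorrelation:
  assumes p: "p \<ge> 2" and phi: "phi \<in> DNM p N M" and on: "orthonormal_translates p phi"
    and k: "k < p ^ N"
  shows "(\<Sum>j<p ^ (N + M). grid_val p N phi (int j - int k) * cnj (grid_val p N phi (int j)))
       = (if k = 0 then of_nat p ^ M else 0)"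
proof -
  have p0: "p > 0" using p by simp
  have q0: "(of_nat p :: rat) > 0" using p by simp
  have k_frac: "(of_nat k :: rat) / of_nat p ^ N < 1"
  proof -
    have "(of_nat k :: rat) < of_nat (p ^ N)" using k by (simp only: of_nat_less_iff)
    then show ?thesis using q0 by simp
  qed
  define a where "a = pemb p (of_nat k / of_nat p ^ N)"
  define b where "b = pemb p 0"
  have a_Ip: "a \<in> Ip p"
    unfolding a_def using pemb_in_Ip[OF p p_fraction_of_int_divide[of p "int k" N]] k_frac by simp
  have b_Ip: "b \<in> Ip p" unfolding b_def using pemb_in_Ip[OF p p_fraction_of_int[of p 0]] by simp
  have "a 0 = of_nat k / of_nat p ^ N" unfolding a_def pemb_def using k_frac by (simp add: rmod_eq_self)
  moreover have "b 0 = 0" unfolding b_def pemb_def rmod_def by simp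
  ultimately have ab: "a = b \<longleftrightarrow> k = 0" using q0 by (auto simp: a_def b_def)
  define G where "G j = grid_val p N phi (int j - int k) * cnj (grid_val p N phi (int j))" for j :: nat
  have on_grid: "phi (psub p x a) * cnj (phi (psub p x b))
      = (if p ^ (n - N) dvd j then G (j div p ^ (n - N)) else 0)"
    if n: "n \<ge> N" and x: "x = pemb p (of_nat j / of_nat p ^ n)" for n j x
    using DNM_translate_on_finer_grid[OF p phi n, of j k]
      DNM_translate_on_finer_grid[OF p phi n, of j 0]
    unfolding x a_def b_def G_def by simp
  have G_periodic: "G (j + p ^ (N + M) * m) = G j" for j m
  proof -
    have "int (j + p ^ (N + M) * m) - int k = (int j - int k) + int (p ^ (N + M)) * int m"
      "int (j + p ^ (N + M) * m) = int j + int (p ^ (N + M)) * int m" by simp_all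
    then show ?thesis unfolding G_def by (metis grid_val_periodic[OF p phi])
  qed
  have "L2_inner p (\<lambda>x. phi (psub p x a)) (\<lambda>x. phi (psub p x b)) = (if a = b then 1 else 0)"
    using on a_Ip b_Ip unfolding orthonormal_translates_def by blast
  moreover have "L2_inner p (\<lambda>x. phi (psub p x a)) (\<lambda>x. phi (psub p x b))
       = (\<Sum>j<p ^ (N + M). G j) / of_nat p ^ M"
    unfolding L2_inner_def by (rule haar_int_eq_period_sum[OF p0 on_grid G_periodic]) simp_all
  ultimately show ?thesis using ab p unfolding G_def by (auto simp: field_simps)
qed

lemma pfourier_on_grid:
  assumes p: "p \<ge> 2" and phi: "phi \<in> DNM p N M"
  shows "pfourier p phi (pemb p (of_nat l / of_nat p ^ M))
       = dft (p ^ (N + M)) (grid_val p N phi) l / of_nat p ^ M"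
proof -
  have p0: "p > 0" using p by simp
  have q0: "(of_nat p :: rat) > 0" using p by simp
  define P where "P = p ^ (N + M)"
  define G where "G i = cis (2 * pi * (real l * real i) / real P) * grid_val p N phi (int i)" for i
  have on_grid: "pchi p (pmult p (pemb p (of_nat l / of_nat p ^ M)) x) * phi x
      = (if p ^ (n - N) dvd j then G (j div p ^ (n - N)) else 0)"
    if n: "n \<ge> N" and x: "x = pemb p (of_nat j / of_nat p ^ n)" for n j x
  proof -
    define d where "d = p ^ (n - N)"
    have d0: "d > 0" unfolding d_def using p by simp
    have qn: "(of_nat p :: rat) ^ n = of_nat p ^ N * of_nat d"
      unfolding d_def using n by (simp flip: power_add)
    have pm: "pmult p (pemb p (of_nat l / of_nat p ^ M)) x
        = pemb p (of_nat l / of_nat p ^ M * (of_nat j / of_nat p ^ n))"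
      unfolding x by (rule pmult_pemb[OF p]) simp_all
    have ph: "phi x = (if d dvd j then grid_val p N phi (int (j div d)) else 0)"
      using DNM_on_finer_grid[OF p phi n, of "int j"] unfolding x d_def[symmetric] by (simp add: zdiv_int)
    show ?thesis
    proof (cases "d dvd j")
      case True
      then obtain i where j: "j = d * i" by blast
      have "(of_nat l / of_nat p ^ M * (of_nat j / of_nat p ^ n) :: rat) = of_nat (l * i) / of_nat P"
        unfolding j qn P_def using d0 q0 by (simp add: field_simps power_add)
      then have "pchi p (pemb p (of_nat l / of_nat p ^ M * (of_nat j / of_nat p ^ n)))
          = cis (2 * pi * (real l * real i) / real P)"
        unfolding pchi_pemb by (simp add: of_rat_divide of_rat_mult)
      moreover have "j div d = i" unfolding j using d0 by simp
      ultimately show ?thesis using True pm ph unfolding G_def d_def[symmetric] by simp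
    next
      case False
      then show ?thesis using ph unfolding d_def[symmetric] by simp
    qed
  qed
  have G_periodic: "G (i + P * m) = G i" for i m
  proof -
    have "cis (2 * pi * (real l * real (i + P * m)) / real P)
        = cis (2 * pi * (real l * real i) / real P) * cis (2 * pi * real (l * m))"
      unfolding cis_mult using p by (simp add: P_def field_simps)
    moreover have "grid_val p N phi (int (i + P * m)) = grid_val p N phi (int i)"
      using grid_val_periodic[OF p phi, of "int i" "int m"] unfolding P_def by simp
    ultimately show ?thesis unfolding G_def by simp
  qed
  have "pfourier p phi (pemb p (of_nat l / of_nat p ^ M)) = (\<Sum>i<P. G i) / of_nat p ^ M"
    unfolding pfourier_def P_def
    by (rule haar_int_eq_period_sum[OF p0 on_grid G_periodic[unfolded P_def]]) simp_all
  then show ?thesis unfolding G_def dft_def P_def .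
qed

theorem theorem7:
  fixes p M N :: nat and phi :: "padic \<Rightarrow> complex"
  assumes "prime p"
    and "phi \<in> DNM p N M"
    and "orthonormal_translates p phi"
  shows "\<forall>k<p ^ N.
     (\<Sum>l<p ^ (M + N).
        complex_of_real ((cmod (pfourier p phi (pemb p (of_nat l / of_nat p ^ M))))\<^sup>2)
        * pchi p (pemb p (of_nat (l * k) / of_nat p ^ (M + N))))
     = (if k = 0 then of_nat p ^ N else 0)"
proof (intro allI impI)
  fix k assume k: "k < p ^ N"
  have p: "p \<ge> 2" using assms(1) by (simp add: prime_ge_2_nat)
  define P where "P = p ^ (N + M)"
  have P_pos: "P > 0" unfolding P_def using p by simp
  define c where "c = grid_val p N phi"
  have "pchi p (pemb p (of_nat (l * k) / of_nat p ^ (M + N)))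
      = cis (2 * pi * (real l * real k) / real P)" for l
    unfolding pchi_pemb P_def by (simp add: of_rat_divide of_rat_mult of_rat_power add.commute)
  moreover have "cmod (pfourier p phi (pemb p (of_nat l / of_nat p ^ M))) = cmod (dft P c l) / p ^ M" for l
    unfolding pfourier_on_grid[OF p assms(2)] P_def c_def by (simp add: norm_divide norm_power)
  ultimately have "(\<Sum>l<p ^ (M + N).
        complex_of_real ((cmod (pfourier p phi (pemb p (of_nat l / of_nat p ^ M))))\<^sup>2)
        * pchi p (pemb p (of_nat (l * k) / of_nat p ^ (M + N))))
      = (\<Sum>l<P. of_real ((cmod (dft P c l))\<^sup>2) * cis (2 * pi * (real l * real k) / real P))
        / (of_nat p ^ M)\<^sup>2" (is "?S = _")
    by (simp add: P_def add.commute sum_divide_distrib power_divide)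
  also have "\<dots> = of_nat P * (\<Sum>j<P. c (int j - int k) * cnj (c (int j))) / (of_nat p ^ M)\<^sup>2"
    using dft_power_spectrum_autocorrelation[OF P_pos] grid_val_periodic[OF p assms(2)]
    unfolding c_def P_def by simp
  also have "\<dots> = (if k = 0 then of_nat p ^ N else 0)"
    using orthonormal_translates_autocorrelation[OF p assms(2,3) k] p
    unfolding c_def P_def by (simp add: power_add field_simps power2_eq_square)
  finally show "?S = (if k = 0 then of_nat p ^ N else 0)" .
qed

end
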